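(* Let $N\ge 1$ and $0\le k\le N$ be integers (e.g. $k=\lfloor N/E\rfloor$ for an integer $E\ge1$). Let $F_k$ be the top-$k$ selection rule: for $r_{1:N}\in\mathbb{R}^N$, $F_k(r_{1:N})$ is a set of $k$ indices $t\in[N]$ with the $k$ largest values $r_t$ (ties broken by any fixed deterministic rule, e.g. by index). Then every finite-range advice that causalizes $F_k$ has range of size at least $\binom{N}{k}$; that is, $\mathcal{L}_{F_k}([1\!:\!N])\ge\log_2\binom{N}{k}$.
   Context: Let $[N]=\{1,\dots,N\}$. A deterministic selection rule is a map $F$ from logit sequences $r_{1:N}=(r_1,\dots,r_N)\in\mathbb{R}^N$ to subsets $F(r_{1:N})\subseteq[N]$; write $z_t=\mathbf{1}[t\in F(r_{1:N})]$. An advice variable is $A=\alpha(r_{1:N})$ where $\alpha$ (the encoder) is any function of the whole sequence with finite range $\mathrm{Range}(\alpha)=\{\alpha(r_{1:N}): r_{1:N}\in\mathbb{R}^N\}$. $A$ causalizes $F$ if there exist functions $g_1,\dots,g_N$ such that $z_t=g_t(r_{1:t},\alpha(r_{1:N}))$ for all $r_{1:N}\in\mathbb{R}^N$ and all $t\in[N]$. The future information leakage of $F$ on length $N$ is $\mathcal{L}_F([1\!:\!N])=\min_{\alpha,\{g_t\}}\log_2|\mathrm{Range}(\alpha)|$, the minimum over all finite-range encoders $\alpha$ and functions $g_t$ such that $\alpha$ causalizes $F$. *)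

theory Defs
  imports Complex_Main
begin

text \<open>A logit sequence r_{1:N} is a real list of length N; r_t is r ! (t - 1), for t in {1..N}.
  A selection rule maps such lists to subsets of {1..N}.\<close>

definition is_topk_rule :: "nat \<Rightarrow> nat \<Rightarrow> (real list \<Rightarrow> nat set) \<Rightarrow> bool" where
  "is_topk_rule N k F \<longleftrightarrow>
     (\<forall>r. length r = N \<longrightarrow>
        F r \<subseteq> {1..N} \<and> card (F r) = k \<and>
        (\<forall>i\<in>F r. \<forall>j\<in>{1..N} - F r. r ! (j - 1) \<le> r ! (i - 1)))"

definition causalizes :: "nat \<Rightarrow> (real list \<Rightarrow> nat set) \<Rightarrow> (real list \<Rightarrow> 'a)
    \<Rightarrow> (nat \<Rightarrow> real list \<Rightarrow> 'a \<Rightarrow> bool) \<Rightarrow> bool" where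
  "causalizes N F \<alpha> g \<longleftrightarrow>
     (\<forall>r. length r = N \<longrightarrow> (\<forall>t\<in>{1..N}. (t \<in> F r) = g t (take t r) (\<alpha> r)))"

definition advice_range :: "nat \<Rightarrow> (real list \<Rightarrow> 'a) \<Rightarrow> 'a set" where
  "advice_range N \<alpha> = \<alpha> ` {r. length r = N}"

text \<open>Future information leakage; advice values are encoded as naturals (w.l.o.g. for finite ranges).\<close>

definition leakage :: "nat \<Rightarrow> (real list \<Rightarrow> nat set) \<Rightarrow> real" where
  "leakage N F = Inf {log 2 (real (card (advice_range N \<alpha>))) | \<alpha> g.
      finite (advice_range N (\<alpha> :: real list \<Rightarrow> nat)) \<and> causalizes N F \<alpha> g}"

end

theory Submission
  imports Defs "HOL-Library.Nat_Bijection"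
begin

text \<open>For \<open>S \<subseteq> [N]\<close> put \<open>r_t = \<Sum>s<t. \<plusminus>2^-s\<close>, the sign being negative exactly when \<open>s \<in> S\<close>.
  Each step outweighs all later ones together, so every index in \<open>S\<close> carries a larger value than
  every index outside \<open>S\<close>, and the top-\<open>k\<close> rule selects precisely \<open>S\<close> when \<open>|S| = k\<close>; yet the
  prefix \<open>r_1..r_t\<close> only depends on \<open>S \<inter> [1, t)\<close>. If two \<open>k\<close>-subsets first differ at \<open>t\<close>, their
  sequences agree up to \<open>t\<close> while \<open>z_t\<close> differs, so only the advice can separate them: it is
  injective on the \<open>N choose k\<close> subsets.\<close>

definition walk_sign :: "nat set \<Rightarrow> nat \<Rightarrow> real" where
  "walk_sign S s = (if s \<in> S then -1 else 1)"

definition sign_walk :: "nat set \<Rightarrow> nat \<Rightarrow> real" where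
  "sign_walk S t = (\<Sum>s<t. walk_sign S s * (1/2)^s)"

definition sign_walk_seq :: "nat \<Rightarrow> nat set \<Rightarrow> real list" where
  "sign_walk_seq N S = map (\<lambda>u. sign_walk S (Suc u)) [0..<N]"

lemma half_powers_tail_less: "(\<Sum>s\<in>{a<..<b}. (1/2::real)^s) < (1/2)^a"
proof (cases "a < b")
  case True
  then have "{a<..<b} = {Suc a..b - 1}" by auto
  with True show ?thesis by (simp add: sum_gp)
qed simp

lemma half_powers_leading_sign:
  fixes \<sigma> :: "nat \<Rightarrow> real"
  assumes "a < b" and unit: "\<And>s. \<bar>\<sigma> s\<bar> = 1"
  shows "0 < \<sigma> a * (\<Sum>s\<in>{a..<b}. \<sigma> s * (1/2)^s)"
proof -
  have "- 1 \<le> \<sigma> a * \<sigma> s" for s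
    using abs_ge_minus_self[of "\<sigma> a * \<sigma> s"] unit[of a] unit[of s] by (simp add: abs_mult)
  then have "- ((1/2::real)^s) \<le> \<sigma> a * \<sigma> s * (1/2)^s" for s
    using mult_right_mono[of "- 1" "\<sigma> a * \<sigma> s" "(1/2::real)^s"] by simp
  then have "- (\<Sum>s\<in>{a<..<b}. (1/2::real)^s) \<le> (\<Sum>s\<in>{a<..<b}. \<sigma> a * \<sigma> s * (1/2)^s)"
    unfolding sum_negf[symmetric] by (rule sum_mono)
  moreover have "\<sigma> a * \<sigma> a = 1"
    using abs_mult_self_eq[of "\<sigma> a"] unit[of a] by simp
  moreover have "{a..<b} = insert a {a<..<b}"
    using \<open>a < b\<close> by auto
  ultimately have "\<sigma> a * (\<Sum>s\<in>{a..<b}. \<sigma> s * (1/2)^s)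
      \<ge> (1/2)^a - (\<Sum>s\<in>{a<..<b}. (1/2::real)^s)"
    by (simp add: sum_distrib_left distrib_left flip: mult.assoc)
  with half_powers_tail_less[of a b] show ?thesis
    by linarith
qed

lemma sign_walk_diff_sign:
  assumes "a < b"
  shows "0 < walk_sign S a * (sign_walk S b - sign_walk S a)"
proof -
  have "sign_walk S b - sign_walk S a = (\<Sum>s\<in>{a..<b}. walk_sign S s * (1/2)^s)"
    using sum.atLeastLessThan_concat[of 0 a b "\<lambda>s. walk_sign S s * (1/2)^s"] \<open>a < b\<close>
    by (simp add: sign_walk_def lessThan_atLeast0)
  moreover have "\<bar>walk_sign S s\<bar> = 1" for s
    by (simp add: walk_sign_def)
  ultimately show ?thesis
    using half_powers_leading_sign[OF \<open>a < b\<close>] by simp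
qed

lemma sign_walk_separates:
  assumes "i \<in> S" and "j \<notin> S"
  shows "sign_walk S j < sign_walk S i"
proof (cases "j < i")
  case True
  from sign_walk_diff_sign[OF this, of S] \<open>j \<notin> S\<close> show ?thesis
    by (simp add: walk_sign_def)
next
  case False
  with assms have "i < j" by (cases "i = j") auto
  from sign_walk_diff_sign[OF this, of S] \<open>i \<in> S\<close> show ?thesis
    by (simp add: walk_sign_def)
qed

lemma sign_walk_seq_cong:
  assumes "S \<inter> {..<t} = T \<inter> {..<t}"
  shows "sign_walk_seq t S = sign_walk_seq t T"
proof -
  have "walk_sign S s = walk_sign T s" if "s < t" for s
    using assms that by (auto simp: walk_sign_def)
  then show ?thesis
    unfolding sign_walk_seq_def sign_walk_def by (auto intro!: sum.cong)
qed

lemma length_sign_walk_seq [simp]: "length (sign_walk_seq N S) = N"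
  by (simp add: sign_walk_seq_def)

lemma nth_sign_walk_seq: "u < N \<Longrightarrow> sign_walk_seq N S ! u = sign_walk S (Suc u)"
  by (simp add: sign_walk_seq_def)

lemma take_sign_walk_seq: "t \<le> N \<Longrightarrow> take t (sign_walk_seq N S) = sign_walk_seq t S"
  by (simp add: sign_walk_seq_def take_map)

lemma topk_rule_selects_separated:
  assumes topk: "is_topk_rule N k F" and r: "length r = N"
    and S: "S \<subseteq> {1..N}" "card S = k"
    and sep: "\<And>i j. i \<in> S \<Longrightarrow> j \<in> {1..N} - S \<Longrightarrow> r ! (j - 1) < r ! (i - 1)"
  shows "F r = S"
proof (rule ccontr)
  assume "F r \<noteq> S"
  have F: "F r \<subseteq> {1..N}" "card (F r) = k"
    and top: "\<And>i j. i \<in> F r \<Longrightarrow> j \<in> {1..N} - F r \<Longrightarrow> r ! (j - 1) \<le> r ! (i - 1)"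
    using topk r unfolding is_topk_rule_def by blast+
  have "finite S" "finite (F r)"
    using S F finite_subset by blast+
  with \<open>F r \<noteq> S\<close> F S have "\<not> F r \<subseteq> S" "\<not> S \<subseteq> F r"
    by (metis card_subset_eq)+
  then obtain i j where "i \<in> F r - S" "j \<in> S - F r"
    by blast
  with S F have "r ! (j - 1) \<le> r ! (i - 1)" "r ! (i - 1) < r ! (j - 1)"
    using top[of i j] sep[of j i] by auto
  then show False by linarith
qed

lemma topk_rule_sign_walk_seq:
  assumes "is_topk_rule N k F" "S \<subseteq> {1..N}" "card S = k"
  shows "F (sign_walk_seq N S) = S"
proof (rule topk_rule_selects_separated[OF assms(1) _ assms(2,3)])
  fix i j assume "i \<in> S" "j \<in> {1..N} - S"
  moreover from this have "i - 1 < N" "j - 1 < N" "Suc (i - 1) = i" "Suc (j - 1) = j"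
    using assms(2) by force+
  ultimately show "sign_walk_seq N S ! (j - 1) < sign_walk_seq N S ! (i - 1)"
    using sign_walk_separates by (simp add: nth_sign_walk_seq)
qed simp

lemma causal_advice_injective:
  fixes \<alpha> :: "real list \<Rightarrow> 'a"
  assumes causal: "causalizes N F \<alpha> g" and K: "K \<subseteq> Pow {1..N}"
    and seq: "\<And>S. S \<in> K \<Longrightarrow> length (seq S) = N \<and> F (seq S) = S"
    and prefix: "\<And>S T t. S \<in> K \<Longrightarrow> T \<in> K \<Longrightarrow> t \<le> N \<Longrightarrow>
        S \<inter> {..<t} = T \<inter> {..<t} \<Longrightarrow> take t (seq S) = take t (seq T)"
  shows "inj_on (\<lambda>S. \<alpha> (seq S)) K"
proof (rule inj_onI, rule ccontr)
  fix S T assume S: "S \<in> K" and T: "T \<in> K"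
    and same_advice: "\<alpha> (seq S) = \<alpha> (seq T)" and "S \<noteq> T"
  have "S \<subseteq> {1..N}" "T \<subseteq> {1..N}"
    using S T K by auto
  define D where "D = (S - T) \<union> (T - S)"
  have "D \<subseteq> {1..N}" "D \<noteq> {}"
    using \<open>S \<subseteq> {1..N}\<close> \<open>T \<subseteq> {1..N}\<close> \<open>S \<noteq> T\<close> by (auto simp: D_def)
  then have "finite D"
    using finite_subset by blast
  define t where "t = Min D"
  have "t \<in> D" and t_least: "\<And>s. s \<in> D \<Longrightarrow> t \<le> s"
    using \<open>finite D\<close> \<open>D \<noteq> {}\<close> by (simp_all add: t_def)
  then have t: "t \<in> {1..N}"
    using \<open>D \<subseteq> {1..N}\<close> by blast
  have "s \<notin> D" if "s < t" for s
    using t_least that by (meson not_le)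
  then have "S \<inter> {..<t} = T \<inter> {..<t}"
    by (auto simp: D_def)
  then have same_prefix: "take t (seq S) = take t (seq T)"
    using S T t by (intro prefix) auto
  have decode: "(t \<in> X) = g t (take t (seq X)) (\<alpha> (seq X))" if "X \<in> K" for X
    using causal seq[OF that] t unfolding causalizes_def by metis
  have "(t \<in> S) = (t \<in> T)"
    unfolding decode[OF S] decode[OF T] same_prefix same_advice ..
  with \<open>t \<in> D\<close> show False
    by (auto simp: D_def)
qed

lemma topk_advice_range_card_ge:
  fixes \<alpha> :: "real list \<Rightarrow> 'a"
  assumes topk: "is_topk_rule N k F"
    and finite: "finite (advice_range N \<alpha>)" and causal: "causalizes N F \<alpha> g"
  shows "N choose k \<le> card (advice_range N \<alpha>)"
proof -
  let ?K = "{S. S \<subseteq> {1..N} \<and> card S = k}"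
  have inj: "inj_on (\<lambda>S. \<alpha> (sign_walk_seq N S)) ?K"
  proof (rule causal_advice_injective[OF causal])
    fix S T t assume "t \<le> N" and agree: "S \<inter> {..<t} = T \<inter> {..<t}"
    show "take t (sign_walk_seq N S) = take t (sign_walk_seq N T)"
      unfolding take_sign_walk_seq[OF \<open>t \<le> N\<close>] using agree by (rule sign_walk_seq_cong)
  next
    fix S assume "S \<in> ?K"
    then show "length (sign_walk_seq N S) = N \<and> F (sign_walk_seq N S) = S"
      by (simp add: topk_rule_sign_walk_seq[OF topk])
  qed blast
  have "(\<lambda>S. \<alpha> (sign_walk_seq N S)) ` ?K \<subseteq> advice_range N \<alpha>"
    by (auto simp: advice_range_def)
  then have "card ((\<lambda>S. \<alpha> (sign_walk_seq N S)) ` ?K) \<le> card (advice_range N \<alpha>)"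
    using finite by (rule card_mono[rotated])
  then show ?thesis
    using n_subsets[of "{1..N}" k] card_image[OF inj] by simp
qed

lemma causalizes_set_encode:
  assumes "\<And>r. length r = N \<Longrightarrow> F r \<subseteq> {1..N}"
  shows "finite (advice_range N (\<lambda>r. set_encode (F r)))"
    and "causalizes N F (\<lambda>r. set_encode (F r)) (\<lambda>t _ a. t \<in> set_decode a)"
proof -
  have "advice_range N (\<lambda>r. set_encode (F r)) \<subseteq> set_encode ` Pow {1..N}"
    using assms by (auto simp: advice_range_def)
  then show "finite (advice_range N (\<lambda>r. set_encode (F r)))"
    by (rule finite_subset) simp
  show "causalizes N F (\<lambda>r. set_encode (F r)) (\<lambda>t _ a. t \<in> set_decode a)"
    unfolding causalizes_def
  proof (intro allI impI ballI)
    fix r :: "real list" and t assume "length r = N"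
    then have "F r \<subseteq> {1..N}"
      by (rule assms)
    then have "finite (F r)"
      by (rule finite_subset) simp
    then show "(t \<in> F r) = (t \<in> set_decode (set_encode (F r)))"
      by (simp add: set_encode_inverse)
  qed
qed

lemma leakage_ge_log:
  assumes range: "\<And>r. length r = N \<Longrightarrow> F r \<subseteq> {1..N}"
    and bound: "\<And>(\<alpha> :: real list \<Rightarrow> nat) g. finite (advice_range N \<alpha>) \<Longrightarrow>
        causalizes N F \<alpha> g \<Longrightarrow> m \<le> card (advice_range N \<alpha>)"
    and "0 < m"
  shows "log 2 (real m) \<le> leakage N F"
  unfolding leakage_def
proof (rule cInf_greatest)
  show "{log 2 (real (card (advice_range N \<alpha>))) | \<alpha> g.
      finite (advice_range N (\<alpha> :: real list \<Rightarrow> nat)) \<and> causalizes N F \<alpha> g} \<noteq> {}"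
    \<comment> \<open>otherwise the infimum would be the junk value \<open>Inf {}\<close>\<close>
    using causalizes_set_encode[OF range] by (intro ex_in_conv[THEN iffD1] exI CollectI) fast
next
  fix x assume "x \<in> {log 2 (real (card (advice_range N \<alpha>))) | \<alpha> g.
      finite (advice_range N (\<alpha> :: real list \<Rightarrow> nat)) \<and> causalizes N F \<alpha> g}"
  then obtain \<alpha> :: "real list \<Rightarrow> nat" and g where x: "x = log 2 (real (card (advice_range N \<alpha>)))"
    and advice: "finite (advice_range N \<alpha>)" "causalizes N F \<alpha> g"
    by blast
  from advice have "m \<le> card (advice_range N \<alpha>)"
    by (rule bound)
  with \<open>0 < m\<close> show "log 2 (real m) \<le> x"
    unfolding x by simp
qed

theorem theoremA1:
  fixes N k :: nat and F :: "real list \<Rightarrow> nat set"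
  assumes "N \<ge> 1" and "k \<le> N" and "is_topk_rule N k F"
  shows "(\<forall>(\<alpha> :: real list \<Rightarrow> 'a) g. finite (advice_range N \<alpha>) \<and> causalizes N F \<alpha> g
            \<longrightarrow> real (N choose k) \<le> real (card (advice_range N \<alpha>)))
       \<and> leakage N F \<ge> log 2 (real (N choose k))"
proof
  show "\<forall>(\<alpha> :: real list \<Rightarrow> 'a) g. finite (advice_range N \<alpha>) \<and> causalizes N F \<alpha> g
            \<longrightarrow> real (N choose k) \<le> real (card (advice_range N \<alpha>))"
    using topk_advice_range_card_ge[OF assms(3)] by auto
  show "leakage N F \<ge> log 2 (real (N choose k))"
  proof (rule leakage_ge_log)
    show "F r \<subseteq> {1..N}" if "length r = N" for r
      using assms(3) that by (simp add: is_topk_rule_def)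
  qed (use topk_advice_range_card_ge[OF assms(3)] assms(2) in auto)
qed

end
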